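(* Let $\kappa$ be a kernel and $(A_n)$ a sequence of non-negative symmetric $n\times n$ matrices with $\delta_\square(A_n,\kappa)\to0$. Then there is a function $M(n)=o(n)$ such that only $o(n)$ entries of $A_n$ exceed $M(n)$, and the sum of these entries is $o(n^2)$.
   Context: A kernel is an integrable symmetric measurable $\kappa:[0,1]^2\to[0,\infty)$ (Lebesgue measure). For a matrix $A_n=(a_{ij})$, $\kappa_{A_n}$ equals $a_{ij}$ on $((i-1)/n,i/n]\times((j-1)/n,j/n]$. Cut norm $\|W\|_\square=\sup_{S,T}|\int_{S\times T}W|$; cut metric $\delta_\square(\kappa,\kappa')=\inf_\tau\|\kappa-\kappa'^\tau\|_\square$ over measure-preserving bijections $\tau$ of $[0,1]$, $\kappa'^\tau(x,y)=\kappa'(\tau(x),\tau(y))$; $\delta_\square(A_n,\kappa)=\delta_\square(\kappa_{A_n},\kappa)$. *)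

theory Defs
  imports "HOL-Analysis.Analysis" "HOL-Library.Landau_Symbols"
begin

definition unit_iv :: "real measure" where
  "unit_iv = restrict_space lborel {0..1}"

definition is_kernel :: "(real \<Rightarrow> real \<Rightarrow> real) \<Rightarrow> bool" where
  "is_kernel k \<longleftrightarrow>
     (\<lambda>(x,y). k x y) \<in> borel_measurable (unit_iv \<Otimes>\<^sub>M unit_iv) \<and>
     integrable (unit_iv \<Otimes>\<^sub>M unit_iv) (\<lambda>(x,y). k x y) \<and>
     (\<forall>x\<in>{0..1}. \<forall>y\<in>{0..1}. k x y = k y x \<and> 0 \<le> k x y)"

text \<open>Step kernel of an n x n matrix (0-indexed entries a i j, i,j < n):
  value a i j on (i/n,(i+1)/n] x (j/n,(j+1)/n].\<close>
definition step_kernel :: "nat \<Rightarrow> (nat \<Rightarrow> nat \<Rightarrow> real) \<Rightarrow> real \<Rightarrow> real \<Rightarrow> real" where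
  "step_kernel n a x y =
     (\<Sum>i<n. \<Sum>j<n. a i j * indicator {real i / real n <.. real (Suc i) / real n} x
                           * indicator {real j / real n <.. real (Suc j) / real n} y)"

definition cut_norm :: "(real \<times> real \<Rightarrow> real) \<Rightarrow> real" where
  "cut_norm W = Sup {\<bar>LINT z|(unit_iv \<Otimes>\<^sub>M unit_iv). indicator (S \<times> T) z * W z\<bar> | S T.
                       S \<in> sets unit_iv \<and> T \<in> sets unit_iv}"

definition mp_bij :: "(real \<Rightarrow> real) \<Rightarrow> bool" where
  "mp_bij t \<longleftrightarrow> bij_betw t {0..1} {0..1} \<and> t \<in> unit_iv \<rightarrow>\<^sub>M unit_iv \<and>
     (\<forall>B\<in>sets unit_iv. emeasure unit_iv (t -` B \<inter> space unit_iv) = emeasure unit_iv B)"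

definition cut_dist :: "(real \<Rightarrow> real \<Rightarrow> real) \<Rightarrow> (real \<Rightarrow> real \<Rightarrow> real) \<Rightarrow> real" where
  "cut_dist k k' = Inf {cut_norm (\<lambda>(x,y). k x y - k' (t x) (t y)) | t. mp_bij t}"

end

theory Submission
  imports Defs "HOL-Probability.Probability"
begin

(* Let d_n be the cut distance between the step kernel of A_n and the kernel k,
   realised (up to 1/(n+1)) by measure-preserving bijections t_n.  Integrating against unions
   of the grid cells ((i-1)/n,i/n] of the step kernel shows, for every truncation level L,
     (1) the mass of any set of rows of A_n is at most n^2 (d_n + L |rows|/n + tail(L)),
     (2) the mass of a "matching" {(i, g i) | i in R} is at most n^2 (4 d_n + L |R|/n^2 + tail(L)),
   where tail(L) = integral of max(k - L, 0) tends to 0 as L grows (k is integrable).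
   For a fixed level th > 0 consider the entries exceeding th n.  Bound (2), applied to one
   heavy entry per column, shows that few columns contain heavy entries; by symmetry and (1)
   few rows contain heavy entries; by (1) again the heavy entries carry mass o(n^2).
   A diagonal argument finally lets th = th_n tend to 0 slowly, and M(n) = th_n n works.
   The file develops, in order: the unit square and its grid cells, integrals of step kernels
   over cell rectangles, rearrangement by measure-preserving bijections and the tail of k,
   the bounds (1) and (2), the combinatorics of heavy entries, the limit arguments, and the
   theorem. *)

lemma unit_iv_space[simp]: "space unit_iv = {0..1}"
  by (simp add: unit_iv_def)

lemma sets_unit_iv: "A \<in> sets unit_iv \<longleftrightarrow> A \<subseteq> {0..1} \<and> A \<in> sets borel"
  unfolding unit_iv_def by (subst sets_restrict_space_iff) auto

lemma emeasure_unit_iv: "A \<subseteq> {0..1} \<Longrightarrow> emeasure unit_iv A = emeasure lborel A"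
  unfolding unit_iv_def by (rule emeasure_restrict_space) auto

lemma prob_space_unit_iv: "prob_space unit_iv"
  by (rule prob_spaceI) (simp add: emeasure_unit_iv)

interpretation U: prob_space unit_iv by (rule prob_space_unit_iv)

abbreviation unit_sq :: "(real \<times> real) measure" where
  "unit_sq \<equiv> unit_iv \<Otimes>\<^sub>M unit_iv"

lemma prob_space_unit_sq: "prob_space unit_sq"
  by (simp add: U.prob_space_axioms prob_space_pair)

interpretation P: prob_space unit_sq by (rule prob_space_unit_sq)


lemma measure_Times_unit_sq: "A \<in> sets unit_iv \<Longrightarrow> B \<in> sets unit_iv \<Longrightarrow>
   measure unit_sq (A \<times> B) = measure unit_iv A * measure unit_iv B"
  by (simp add: U.emeasure_pair_measure_Times measure_def enn2real_mult)

definition cell :: "nat \<Rightarrow> nat \<Rightarrow> real set" where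
  "cell n i = {real i / real n <.. real (Suc i) / real n}"

lemma cell_sub: assumes "i < n" shows "cell n i \<subseteq> {0..1}"
proof
  fix x assume "x \<in> cell n i"
  then have a: "real i / real n < x" "x \<le> real (Suc i) / real n" by (auto simp: cell_def)
  have "0 \<le> real i / real n" by simp
  moreover have "real (Suc i) / real n \<le> 1" using assms by (simp add: divide_le_eq_1)
  ultimately show "x \<in> {0..1}" using a by (auto intro: order.trans[of 0 "real i / real n"] simp del: of_nat_Suc)
qed

lemma cell_sets: "i < n \<Longrightarrow> cell n i \<in> sets unit_iv"
  using cell_sub by (auto simp: sets_unit_iv cell_def)

lemma cell_measure: "i < n \<Longrightarrow> measure unit_iv (cell n i) = 1 / real n"
proof -
  assume "i < n"
  then have "emeasure unit_iv (cell n i) = ennreal (real (Suc i) / real n - real i / real n)"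
    using cell_sub[of i n] by (simp add: emeasure_unit_iv cell_def divide_right_mono)
  also have "\<dots> = ennreal (1 / real n)" by (simp add: diff_divide_distrib[symmetric])
  finally show ?thesis by (simp add: measure_def)
qed

lemma cell_disj: assumes "i \<noteq> j" shows "cell n i \<inter> cell n j = {}"
proof (rule ccontr)
  assume "cell n i \<inter> cell n j \<noteq> {}"
  then obtain x where x: "x \<in> cell n i" "x \<in> cell n j" by blast
  then have n: "n > 0" by (cases "n = 0") (auto simp: cell_def)
  from x n have "real i < x * n" "x * n \<le> real i + 1" "real j < x * n" "x * n \<le> real j + 1"
    by (auto simp: cell_def field_simps)
  then have "real i < real j + 1" "real j < real i + 1" by linarith+
  then show False using assms by linarith
qed

lemma cell_disjoint_family: "disjoint_family_on (cell n) I"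
  using cell_disj by (auto simp: disjoint_family_on_def)

lemma cell_rect_sets: "i < n \<Longrightarrow> j < n \<Longrightarrow> cell n i \<times> cell n j \<in> sets unit_sq"
  by (simp add: cell_sets)

lemma indicator_cell_unique: "x \<in> cell n i0 \<Longrightarrow> indicator (cell n i) x = (if i = i0 then 1 else (0::real))"
  using cell_disj[of i i0 n] by (auto simp: indicator_def)

lemma step_kernel_cells: "step_kernel n a x y =
   (\<Sum>i<n. \<Sum>j<n. a i j * indicator (cell n i \<times> cell n j) (x,y))"
  unfolding step_kernel_def cell_def[symmetric] by (simp add: indicator_times mult.assoc)

lemma step_kernel_on_cell:
  assumes "i0 < n" "j0 < n" "x \<in> cell n i0" "y \<in> cell n j0"
  shows "step_kernel n a x y = a i0 j0"
proof -
  have delta: "c * (if P then 1 else 0) = (if P then c else 0)" for c :: real and P by simp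
  show ?thesis
    unfolding step_kernel_def cell_def[symmetric] indicator_cell_unique[OF assms(3)] indicator_cell_unique[OF assms(4)]
    using assms(1,2) by (simp add: delta mult.assoc[symmetric])
qed

lemma integrable_step_kernel: "integrable unit_sq (\<lambda>(x,y). step_kernel n a x y)"
proof -
  have "integrable unit_sq (\<lambda>z. \<Sum>i<n. \<Sum>j<n. a i j * indicator (cell n i \<times> cell n j) z)"
    by (intro Bochner_Integration.integrable_sum integrable_mult_right)
      (auto simp: integrable_indicator_iff cell_rect_sets sets.Int_space_eq2 less_top[symmetric])
  then show ?thesis unfolding step_kernel_cells case_prod_beta prod.collapse .
qed

definition cells_union :: "nat \<Rightarrow> nat set \<Rightarrow> real set" where
  "cells_union n I = (\<Union>i\<in>I. cell n i)"

lemma cells_union_sets: "I \<subseteq> {..<n} \<Longrightarrow> cells_union n I \<in> sets unit_iv"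
  unfolding cells_union_def using cell_sets
  by (intro sets.countable_UN'') (auto intro: countable_subset[of _ "{..<n}"])

lemma indicator_cells_union: "finite I \<Longrightarrow> indicator (cells_union n I) x = (\<Sum>i\<in>I. indicator (cell n i) x)"
  unfolding cells_union_def by (rule indicator_UN_disjoint) (auto simp: cell_disjoint_family)

definition rect :: "(real \<times> real \<Rightarrow> real) \<Rightarrow> real set \<Rightarrow> real set \<Rightarrow> real" where
  "rect V S T = (LINT z|unit_sq. indicator (S \<times> T) z * V z)"

lemma integrable_indicator_mult: "A \<in> sets M \<Longrightarrow> integrable M f \<Longrightarrow> integrable M (\<lambda>x. indicator A x * (f x::real))"
  using integrable_mult_indicator[of A M f] by simp

lemma rect_cells_union:
  assumes V: "integrable unit_sq V" and I: "I \<subseteq> {..<n}" and J: "J \<subseteq> {..<n}"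
  shows "rect V (cells_union n I) (cells_union n J) = (\<Sum>i\<in>I. \<Sum>j\<in>J. rect V (cell n i) (cell n j))"
proof -
  have fin: "finite I" "finite J" using I J finite_subset by blast+
  have int: "integrable unit_sq (\<lambda>z. indicator (cell n i \<times> cell n j) z * V z)" if "i \<in> I" "j \<in> J" for i j
    using that I J by (intro integrable_indicator_mult cell_rect_sets V) auto
  have "indicator (cells_union n I \<times> cells_union n J) z * V z =
      (\<Sum>i\<in>I. \<Sum>j\<in>J. indicator (cell n i \<times> cell n j) z * V z)" for z :: "real \<times> real"
    by (induct z) (simp only: indicator_times indicator_cells_union[OF fin(1)]
        indicator_cells_union[OF fin(2)] sum_distrib_left sum_distrib_right mult.assoc, rule sum.swap)
  then have "rect V (cells_union n I) (cells_union n J) =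
      (LINT z|unit_sq. (\<Sum>i\<in>I. \<Sum>j\<in>J. indicator (cell n i \<times> cell n j) z * V z))"
    unfolding rect_def by presburger
  also have "\<dots> = (\<Sum>i\<in>I. \<Sum>j\<in>J. rect V (cell n i) (cell n j))"
    unfolding rect_def using int
    by (subst Bochner_Integration.integral_sum; simp add: Bochner_Integration.integrable_sum
        Bochner_Integration.integral_sum)
  finally show ?thesis .
qed

lemma rect_step_kernel:
  assumes "i < n" "j < n"
  shows "rect (\<lambda>(x,y). step_kernel n a x y) (cell n i) (cell n j) = a i j / (real n)^2"
proof -
  have "indicator (cell n i \<times> cell n j) z * (\<lambda>(x,y). step_kernel n a x y) z
        = a i j * indicator (cell n i \<times> cell n j) z" for z
    using step_kernel_on_cell[OF assms] by (cases z) (simp add: indicator_times indicator_def)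
  then have "rect (\<lambda>(x,y). step_kernel n a x y) (cell n i) (cell n j)
     = (LINT z|unit_sq. a i j * indicator (cell n i \<times> cell n j) z)"
    unfolding rect_def by presburger
  also have "\<dots> = a i j * measure unit_sq (cell n i \<times> cell n j)"
    using cell_rect_sets[OF assms] by (simp add: sets.Int_space_eq2)
  also have "\<dots> = a i j / (real n)^2"
    using assms by (simp add: measure_Times_unit_sq cell_sets cell_measure power2_eq_square)
  finally show ?thesis .
qed

lemma mp_bij_measurable: "mp_bij t \<Longrightarrow> t \<in> unit_iv \<rightarrow>\<^sub>M unit_iv"
  by (simp add: mp_bij_def)

lemma mp_bij_distr: assumes "mp_bij t" shows "distr unit_iv unit_iv t = unit_iv"
proof (rule measure_eqI)
  show "sets (distr unit_iv unit_iv t) = sets unit_iv" by simp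
  fix A assume "A \<in> sets (distr unit_iv unit_iv t)"
  then show "emeasure (distr unit_iv unit_iv t) A = emeasure unit_iv A"
    using assms by (simp add: emeasure_distr mp_bij_def)
qed

lemma mp_bij_pair_measurable: "mp_bij t \<Longrightarrow> (\<lambda>(x,y). (t x, t y)) \<in> unit_sq \<rightarrow>\<^sub>M unit_sq"
  using mp_bij_measurable[of t] by (simp add: case_prod_beta measurable_pair_iff)

lemma mp_bij_distr_pair: assumes "mp_bij t"
  shows "distr unit_sq unit_sq (\<lambda>(x,y). (t x, t y)) = unit_sq"
proof -
  have "distr unit_iv unit_iv t \<Otimes>\<^sub>M distr unit_iv unit_iv t = distr unit_sq unit_sq (\<lambda>(x,y). (t x, t y))"
    by (rule pair_measure_distr) (auto simp: mp_bij_measurable[OF assms] mp_bij_distr[OF assms]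
        U.sigma_finite_measure_axioms)
  then show ?thesis by (simp add: mp_bij_distr[OF assms])
qed

lemma kernel_measurable: "is_kernel k \<Longrightarrow> (\<lambda>(x,y). k x y) \<in> borel_measurable unit_sq"
  by (simp add: is_kernel_def)

lemma integrable_rearranged: assumes "is_kernel k" "mp_bij t"
  shows "integrable unit_sq (\<lambda>(x,y). k (t x) (t y))"
proof -
  have "integrable (distr unit_sq unit_sq (\<lambda>(x,y). (t x, t y))) (\<lambda>(x,y). k x y)"
    using assms by (simp add: mp_bij_distr_pair is_kernel_def)
  then have "integrable unit_sq (\<lambda>z. (\<lambda>(x,y). k x y) ((\<lambda>(x,y). (t x, t y)) z))"
    by (subst integrable_distr_eq[symmetric])
      (auto simp: mp_bij_pair_measurable[OF assms(2)] kernel_measurable[OF assms(1)])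
  then show ?thesis by (simp add: split_beta')
qed

definition kernel_tail :: "(real \<Rightarrow> real \<Rightarrow> real) \<Rightarrow> real \<Rightarrow> real" where
  "kernel_tail k L = (LINT z|unit_sq. max ((\<lambda>(x,y). k x y) z - L) 0)"

lemma tail_rearranged: assumes "is_kernel k" "mp_bij t"
  shows "(LINT z|unit_sq. max ((\<lambda>(x,y). k (t x) (t y)) z - L) 0) = kernel_tail k L"
proof -
  have "kernel_tail k L =
      (LINT z|distr unit_sq unit_sq (\<lambda>(x,y). (t x, t y)). max ((\<lambda>(x,y). k x y) z - L) 0)"
    by (simp add: kernel_tail_def mp_bij_distr_pair[OF assms(2)])
  also have "\<dots> = (LINT z|unit_sq. max ((\<lambda>(x,y). k x y) ((\<lambda>(x,y). (t x, t y)) z) - L) 0)"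
    using kernel_measurable[OF assms(1)] by (intro integral_distr mp_bij_pair_measurable assms) auto
  finally show ?thesis by (simp add: case_prod_beta)
qed

text \<open>Since \<open>k\<close> is integrable, its tail vanishes as \<open>L \<rightarrow> \<infinity>\<close> (dominated convergence).\<close>

lemma kernel_tail_small: assumes "is_kernel k" "e > 0"
  shows "\<exists>L\<ge>0. kernel_tail k L \<le> e"
proof -
  let ?f = "\<lambda>(x,y). k x y"
  have "(\<lambda>m::nat. LINT z|unit_sq. max (?f z - real m) 0) \<longlonglongrightarrow> (LINT z|unit_sq. (0::real))"
  proof (rule integral_dominated_convergence[where w="\<lambda>z. \<bar>?f z\<bar>"])
    show "(\<lambda>z. 0::real) \<in> borel_measurable unit_sq" by simp
    show "\<And>m. (\<lambda>z. max (?f z - real m) 0) \<in> borel_measurable unit_sq"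
      using kernel_measurable[OF assms(1)] by measurable
    show "integrable unit_sq (\<lambda>z. \<bar>?f z\<bar>)" using assms by (simp add: is_kernel_def)
    show "AE z in unit_sq. (\<lambda>m. max (?f z - real m) 0) \<longlonglongrightarrow> 0"
    proof (rule AE_I2)
      fix z
      obtain N :: nat where "?f z < real N" using reals_Archimedean2 by blast
      then have "\<forall>m\<ge>N. max (?f z - real m) 0 = 0" by (auto simp: max_def)
      then show "(\<lambda>m. max (?f z - real m) 0) \<longlonglongrightarrow> 0"
        by (intro tendsto_eventually eventually_sequentiallyI[of N]) auto
    qed
    show "\<And>m. AE z in unit_sq. norm (max (?f z - real m) 0) \<le> \<bar>?f z\<bar>"
      by (intro AE_I2) auto
  qed
  then obtain N where "\<forall>m\<ge>N. \<bar>LINT z|unit_sq. max (?f z - real m) 0\<bar> < e"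
    using assms(2) LIMSEQ_D[of _ 0 e] by fastforce
  then show ?thesis by (intro exI[of _ "real N"]) (auto simp: kernel_tail_def)
qed

lemma weighted_truncation:
  fixes h v L :: real
  assumes "0 \<le> h" "h \<le> 1"
  shows "h * v \<le> L * h + max (v - L) 0"
proof (cases "v \<le> L")
  case True
  then have "h * v \<le> h * L" using assms by (intro mult_left_mono) auto
  then show ?thesis by (simp add: mult.commute)
next
  case False
  have "h * v = h * L + h * (v - L)" by (simp add: algebra_simps)
  also have "\<dots> \<le> h * L + 1 * (v - L)"
    using assms False by (intro add_left_mono mult_right_mono) auto
  finally show ?thesis using False by (simp add: mult.commute)
qed

lemma cell_pairs_disjoint: "disjoint_family_on (\<lambda>p. cell n (fst p) \<times> cell n (snd p)) Ps"
  unfolding disjoint_family_on_def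
proof (intro ballI impI)
  fix p q :: "nat \<times> nat" assume "p \<noteq> q"
  then have "fst p \<noteq> fst q \<or> snd p \<noteq> snd q" by (auto simp: prod_eq_iff)
  then show "(cell n (fst p) \<times> cell n (snd p)) \<inter> (cell n (fst q) \<times> cell n (snd q)) = {}"
    using cell_disj by blast
qed

lemma integral_cell_pairs:
  assumes "Ps \<subseteq> {..<n} \<times> {..<n}"
  shows "(LINT z|unit_sq. (\<Sum>p\<in>Ps. indicator (cell n (fst p) \<times> cell n (snd p)) z)) = real (card Ps) / (real n)^2"
proof -
  have Cs: "p \<in> Ps \<Longrightarrow> cell n (fst p) \<times> cell n (snd p) \<in> sets unit_sq" for p
    using assms by (auto intro!: cell_rect_sets)
  have "(LINT z|unit_sq. (\<Sum>p\<in>Ps. indicator (cell n (fst p) \<times> cell n (snd p)) z))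
      = (\<Sum>p\<in>Ps. measure unit_sq (cell n (fst p) \<times> cell n (snd p)))"
    by (subst Bochner_Integration.integral_sum)
      (auto simp: integrable_indicator_iff Cs sets.Int_space_eq2 less_top[symmetric])
  also have "\<dots> = (\<Sum>p\<in>Ps. 1 / (real n)^2)"
    using assms by (intro sum.cong refl) (auto simp: measure_Times_unit_sq cell_sets cell_measure power2_eq_square)
  finally show ?thesis by simp
qed

lemma cell_pairs_mass_bound:
  assumes k: "is_kernel k" and t: "mp_bij t" and Ps: "Ps \<subseteq> {..<n} \<times> {..<n}"
  shows "(\<Sum>p\<in>Ps. rect (\<lambda>(x,y). k (t x) (t y)) (cell n (fst p)) (cell n (snd p)))
     \<le> L * real (card Ps) / (real n)^2 + kernel_tail k L"
proof -
  let ?V = "\<lambda>(x,y). k (t x) (t y)"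
  let ?C = "\<lambda>p. cell n (fst p) \<times> cell n (snd p)"
  let ?h = "\<lambda>z. \<Sum>p\<in>Ps. indicator (?C p) z :: real"
  have fin: "finite Ps" using Ps finite_subset by blast
  have Cs: "p \<in> Ps \<Longrightarrow> ?C p \<in> sets unit_sq" for p using Ps by (auto intro!: cell_rect_sets)
  have intV: "integrable unit_sq ?V" by (rule integrable_rearranged[OF k t])
  have h_indicator: "?h z = indicator (\<Union>(?C ` Ps)) z" for z
    by (rule indicator_UN_disjoint[symmetric, OF fin cell_pairs_disjoint])
  have inth: "integrable unit_sq ?h"
    by (rule Bochner_Integration.integrable_sum)
      (auto simp: integrable_indicator_iff Cs sets.Int_space_eq2 less_top[symmetric])
  have "(\<Sum>p\<in>Ps. rect ?V (cell n (fst p)) (cell n (snd p))) = (LINT z|unit_sq. ?h z * ?V z)"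
    unfolding rect_def sum_distrib_right
    by (rule Bochner_Integration.integral_sum[symmetric]) (intro integrable_indicator_mult Cs intV)
  also have "\<dots> \<le> (LINT z|unit_sq. L * ?h z + max (?V z - L) 0)"
  proof (rule integral_mono)
    show "integrable unit_sq (\<lambda>z. ?h z * ?V z)"
      unfolding sum_distrib_right
      by (rule Bochner_Integration.integrable_sum) (intro integrable_indicator_mult Cs intV)
    show "integrable unit_sq (\<lambda>z. L * ?h z + max (?V z - L) 0)"
      using inth intV by auto
    show "?h z * ?V z \<le> L * ?h z + max (?V z - L) 0" for z
      by (rule weighted_truncation) (simp_all add: h_indicator)
  qed
  also have "\<dots> = L * (LINT z|unit_sq. ?h z) + (LINT z|unit_sq. max (?V z - L) 0)"
    using inth intV by simp
  finally show ?thesis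
    by (simp add: integral_cell_pairs[OF Ps] tail_rearranged[OF k t])
qed

text \<open>A diagonal sum is dominated by a signed double sum for a suitable choice of signs
  (choose the signs one index at a time, each time making the cross terms non-negative).\<close>

lemma sign_choice:
  fixes c :: "'a \<Rightarrow> 'a \<Rightarrow> real"
  assumes "finite R"
  shows "\<exists>x. (\<forall>i. x i = 1 \<or> x i = -1) \<and> (\<Sum>i\<in>R. c i i) \<le> (\<Sum>i\<in>R. \<Sum>l\<in>R. x i * x l * c i l)"
  using assms
proof (induction R rule: finite_induct)
  case empty
  then show ?case by (intro exI[of _ "\<lambda>_. 1"]) auto
next
  case (insert r R)
  then obtain x where x: "\<forall>i. x i = 1 \<or> x i = -1"
    "(\<Sum>i\<in>R. c i i) \<le> (\<Sum>i\<in>R. \<Sum>l\<in>R. x i * x l * c i l)" by blast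
  define B where "B = (\<Sum>l\<in>R. x l * (c r l + c l r))"
  define s :: real where "s = (if B \<ge> 0 then 1 else -1)"
  define x' where "x' = x(r := s)"
  have x'R: "\<forall>i\<in>R. x' i = x i" using insert(2) by (auto simp: x'_def)
  have sB: "0 \<le> s * B" by (simp add: s_def)
  have ss: "s * s = 1" by (simp add: s_def)
  have "(\<Sum>i\<in>insert r R. \<Sum>l\<in>insert r R. x' i * x' l * c i l)
      = (\<Sum>i\<in>R. \<Sum>l\<in>R. x i * x l * c i l) + s * B + c r r"
  proof -
    have "(\<Sum>i\<in>insert r R. \<Sum>l\<in>insert r R. x' i * x' l * c i l) =
       (s * s * c r r + (\<Sum>l\<in>R. s * x l * c r l)) +
       (\<Sum>i\<in>R. x i * s * c i r + (\<Sum>l\<in>R. x i * x l * c i l))"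
      using insert(1,2) x'R by (simp add: x'_def sum.insert cong: sum.cong)
    also have "\<dots> = (\<Sum>i\<in>R. \<Sum>l\<in>R. x i * x l * c i l) + s * B + c r r"
      by (simp add: B_def ss sum.distrib sum_distrib_left algebra_simps)
    finally show ?thesis .
  qed
  moreover have "(\<Sum>i\<in>insert r R. c i i) = c r r + (\<Sum>i\<in>R. c i i)"
    using insert by simp
  ultimately have "(\<Sum>i\<in>insert r R. c i i) \<le> (\<Sum>i\<in>insert r R. \<Sum>l\<in>insert r R. x' i * x' l * c i l)"
    using x(2) sB by linarith
  moreover have "\<forall>i. x' i = 1 \<or> x' i = -1" using x by (auto simp: x'_def s_def)
  ultimately show ?case by blast
qed

lemma sum_split_sign:
  fixes f :: "'a \<Rightarrow> real"
  assumes "finite R"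
  shows "(\<Sum>i\<in>R. f i) = (\<Sum>i\<in>{i\<in>R. x i = 1}. f i) + (\<Sum>i\<in>{i\<in>R. x i \<noteq> 1}. f i)"
proof -
  have "R = {i\<in>R. x i = 1} \<union> {i\<in>R. x i \<noteq> 1}" by auto
  then have "(\<Sum>i\<in>R. f i) = (\<Sum>i\<in>{i\<in>R. x i = 1} \<union> {i\<in>R. x i \<noteq> 1}. f i)" by simp
  also have "\<dots> = (\<Sum>i\<in>{i\<in>R. x i = 1}. f i) + (\<Sum>i\<in>{i\<in>R. x i \<noteq> 1}. f i)"
    using assms by (intro sum.union_disjoint) auto
  finally show ?thesis .
qed

lemma signed_double_sum:
  fixes c :: "'a \<Rightarrow> 'a \<Rightarrow> real"
  assumes "finite R" "\<forall>i. x i = 1 \<or> x i = -1"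
  defines "Rp \<equiv> {i\<in>R. x i = 1}" and "Rm \<equiv> {i\<in>R. x i \<noteq> 1}"
  shows "(\<Sum>i\<in>R. \<Sum>l\<in>R. x i * x l * c i l) =
     (\<Sum>i\<in>Rp. \<Sum>l\<in>Rp. c i l) + (\<Sum>i\<in>Rm. \<Sum>l\<in>Rm. c i l)
     - (\<Sum>i\<in>Rp. \<Sum>l\<in>Rm. c i l) - (\<Sum>i\<in>Rm. \<Sum>l\<in>Rp. c i l)"
proof -
  have xm: "i \<in> Rm \<Longrightarrow> x i = -1" for i using assms(2) by (auto simp: Rm_def)
  have xp: "i \<in> Rp \<Longrightarrow> x i = 1" for i by (auto simp: Rp_def)
  have fin: "finite Rp" "finite Rm" using assms(1) by (auto simp: Rp_def Rm_def)
  have "(\<Sum>i\<in>R. \<Sum>l\<in>R. x i * x l * c i l) =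
      (\<Sum>i\<in>Rp. \<Sum>l\<in>Rp. x i * x l * c i l) + (\<Sum>i\<in>Rp. \<Sum>l\<in>Rm. x i * x l * c i l)
      + ((\<Sum>i\<in>Rm. \<Sum>l\<in>Rp. x i * x l * c i l) + (\<Sum>i\<in>Rm. \<Sum>l\<in>Rm. x i * x l * c i l))"
  proof -
    have inner: "(\<Sum>l\<in>R. x i * x l * c i l) = (\<Sum>l\<in>Rp. x i * x l * c i l) + (\<Sum>l\<in>Rm. x i * x l * c i l)" for i
      unfolding Rp_def Rm_def by (rule sum_split_sign[OF assms(1)])
    have outer: "(\<Sum>i\<in>R. \<Sum>l\<in>R. x i * x l * c i l) = (\<Sum>i\<in>Rp. \<Sum>l\<in>R. x i * x l * c i l) + (\<Sum>i\<in>Rm. \<Sum>l\<in>R. x i * x l * c i l)"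
      unfolding Rp_def Rm_def by (rule sum_split_sign[OF assms(1)])
    show ?thesis by (subst outer, simp only: inner sum.distrib add.assoc)
  qed
  also have "\<dots> = (\<Sum>i\<in>Rp. \<Sum>l\<in>Rp. c i l) + (\<Sum>i\<in>Rm. \<Sum>l\<in>Rm. c i l)
     - (\<Sum>i\<in>Rp. \<Sum>l\<in>Rm. c i l) - (\<Sum>i\<in>Rm. \<Sum>l\<in>Rp. c i l)"
    by (simp add: xp xm sum_negf)
  finally show ?thesis .
qed

lemma diagonal_sum_le_rect_bound:
  fixes c :: "'a \<Rightarrow> 'a \<Rightarrow> real"
  assumes fin: "finite R"
    and bnd: "\<And>A B. A \<subseteq> R \<Longrightarrow> B \<subseteq> R \<Longrightarrow> \<bar>\<Sum>i\<in>A. \<Sum>l\<in>B. c i l\<bar> \<le> \<delta>"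
  shows "(\<Sum>i\<in>R. c i i) \<le> 4 * \<delta>"
proof -
  obtain x where x: "\<forall>i. x i = 1 \<or> x i = -1" "(\<Sum>i\<in>R. c i i) \<le> (\<Sum>i\<in>R. \<Sum>l\<in>R. x i * x l * c i l)"
    using sign_choice[OF fin, of c] by blast
  define Rp where "Rp = {i\<in>R. x i = 1}"
  define Rm where "Rm = {i\<in>R. x i \<noteq> 1}"
  have subs: "Rp \<subseteq> R" "Rm \<subseteq> R" by (auto simp: Rp_def Rm_def)
  have "(\<Sum>i\<in>R. \<Sum>l\<in>R. x i * x l * c i l) \<le> 4 * \<delta>"
    unfolding signed_double_sum[OF fin x(1)] Rp_def[symmetric] Rm_def[symmetric]
    using bnd[OF subs(1) subs(1)] bnd[OF subs(2) subs(2)] bnd[OF subs(1) subs(2)] bnd[OF subs(2) subs(1)]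
    by linarith
  then show ?thesis using x(2) by linarith
qed

lemma rect_le_cut_norm:
  assumes W: "integrable unit_sq W" and ST: "S \<in> sets unit_iv" "T \<in> sets unit_iv"
  shows "\<bar>rect W S T\<bar> \<le> cut_norm W"
  unfolding cut_norm_def
proof (rule cSup_upper)
  show "\<bar>rect W S T\<bar> \<in> {\<bar>LINT z|unit_sq. indicator (S \<times> T) z * W z\<bar> | S T. S \<in> sets unit_iv \<and> T \<in> sets unit_iv}"
    using ST unfolding rect_def by blast
  show "bdd_above {\<bar>LINT z|unit_sq. indicator (S \<times> T) z * W z\<bar> | S T. S \<in> sets unit_iv \<and> T \<in> sets unit_iv}"
  proof (rule bdd_aboveI, safe)
    fix S T :: "real set" assume "S \<in> sets unit_iv" "T \<in> sets unit_iv"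
    then show "\<bar>LINT z|unit_sq. indicator (S \<times> T) z * W z\<bar> \<le> (LINT z|unit_sq. \<bar>W z\<bar>)"
      by (intro integral_abs_bound_integral integrable_indicator_mult W) (auto simp: indicator_def W)
  qed
qed

lemma cut_norm_nonneg: "integrable unit_sq W \<Longrightarrow> 0 \<le> cut_norm W"
  using rect_le_cut_norm[of W "{}" "{}"] by simp

context
  fixes k :: "real \<Rightarrow> real \<Rightarrow> real" and t :: "real \<Rightarrow> real" and n :: nat and a :: "nat \<Rightarrow> nat \<Rightarrow> real"
  assumes k: "is_kernel k" and t: "mp_bij t"
begin

definition "rearr = (\<lambda>(x,y). k (t x) (t y))"
definition "diff_kernel = (\<lambda>(x,y). step_kernel n a x y - k (t x) (t y))"

lemma diff_kernel_alt: "diff_kernel = (\<lambda>z. (\<lambda>(x,y). step_kernel n a x y) z - rearr z)"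
  by (auto simp: diff_kernel_def rearr_def fun_eq_iff)

lemma integrable_rearr: "integrable unit_sq rearr"
  unfolding rearr_def by (rule integrable_rearranged[OF k t])

lemma integrable_diff: "integrable unit_sq diff_kernel"
  unfolding diff_kernel_alt using integrable_rearr integrable_step_kernel by simp

lemma rect_diff_kernel: "i < n \<Longrightarrow> j < n \<Longrightarrow>
    rect diff_kernel (cell n i) (cell n j) = a i j / (real n)^2 - rect rearr (cell n i) (cell n j)"
proof -
  assume ij: "i < n" "j < n"
  have "rect diff_kernel (cell n i) (cell n j) =
      rect (\<lambda>(x,y). step_kernel n a x y) (cell n i) (cell n j) - rect rearr (cell n i) (cell n j)"
    unfolding rect_def diff_kernel_alt right_diff_distrib
    by (rule Bochner_Integration.integral_diff)
      (auto intro!: integrable_indicator_mult cell_rect_sets ij integrable_step_kernel integrable_rearr)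
  then show ?thesis using rect_step_kernel[OF ij, of a] by simp
qed

lemma strip_bound:
  assumes I: "I \<subseteq> {..<n}"
  shows "(\<Sum>i\<in>I. \<Sum>j<n. a i j) / (real n)^2 \<le> cut_norm diff_kernel
          + L * real (card I * n) / (real n)^2 + kernel_tail k L"
proof -
  have "rect diff_kernel (cells_union n I) (cells_union n {..<n})
      = (\<Sum>i\<in>I. \<Sum>j<n. rect diff_kernel (cell n i) (cell n j))"
    by (rule rect_cells_union[OF integrable_diff I]) auto
  also have "\<dots> = (\<Sum>i\<in>I. \<Sum>j<n. a i j / (real n)^2) - (\<Sum>i\<in>I. \<Sum>j<n. rect rearr (cell n i) (cell n j))"
    using I by (simp add: rect_diff_kernel subset_eq sum_subtractf)
  also have "(\<Sum>i\<in>I. \<Sum>j<n. rect rearr (cell n i) (cell n j)) =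
      (\<Sum>p\<in>I \<times> {..<n}. rect rearr (cell n (fst p)) (cell n (snd p)))"
    by (simp add: sum.cartesian_product case_prod_beta)
  finally have eq: "rect diff_kernel (cells_union n I) (cells_union n {..<n}) =
      (\<Sum>i\<in>I. \<Sum>j<n. a i j) / (real n)^2 - (\<Sum>p\<in>I \<times> {..<n}. rect rearr (cell n (fst p)) (cell n (snd p)))"
    by (simp add: sum_divide_distrib)
  have "(\<Sum>p\<in>I \<times> {..<n}. rect rearr (cell n (fst p)) (cell n (snd p))) \<le>
      L * real (card (I \<times> {..<n})) / (real n)^2 + kernel_tail k L"
    unfolding rearr_def using I by (intro cell_pairs_mass_bound k t) auto
  moreover have "card (I \<times> {..<n}) = card I * n" by (simp add: card_cartesian_product)
  moreover have "rect diff_kernel (cells_union n I) (cells_union n {..<n}) \<le> cut_norm diff_kernel"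
    using rect_le_cut_norm[OF integrable_diff cells_union_sets[OF I] cells_union_sets[of "{..<n}" n]] by auto
  ultimately show ?thesis using eq by simp
qed

lemma matching_bound:
  assumes R: "R \<subseteq> {..<n}" and gR: "g ` R \<subseteq> {..<n}" and inj: "inj_on g R"
  shows "(\<Sum>i\<in>R. a i (g i)) / (real n)^2 \<le> 4 * cut_norm diff_kernel
          + L * real (card R) / (real n)^2 + kernel_tail k L"
proof -
  define c where "c i l = rect diff_kernel (cell n i) (cell n (g l))" for i l
  have fin: "finite R" using R finite_subset by blast
  have "\<bar>\<Sum>i\<in>A. \<Sum>l\<in>B. c i l\<bar> \<le> cut_norm diff_kernel" if AB: "A \<subseteq> R" "B \<subseteq> R" for A B
  proof -
    have "(\<Sum>i\<in>A. \<Sum>l\<in>B. c i l) = (\<Sum>i\<in>A. \<Sum>j\<in>g ` B. rect diff_kernel (cell n i) (cell n j))"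
      using inj_on_subset[OF inj AB(2)] by (simp add: c_def sum.reindex)
    also have "\<dots> = rect diff_kernel (cells_union n A) (cells_union n (g ` B))"
      using AB R gR by (intro rect_cells_union[symmetric] integrable_diff) (auto simp: subset_eq)
    also have "\<bar>\<dots>\<bar> \<le> cut_norm diff_kernel"
      using AB R gR by (intro rect_le_cut_norm integrable_diff cells_union_sets) (auto simp: subset_eq)
    finally show ?thesis .
  qed
  then have "(\<Sum>i\<in>R. c i i) \<le> 4 * cut_norm diff_kernel"
    by (rule diagonal_sum_le_rect_bound[OF fin])
  moreover have "(\<Sum>i\<in>R. c i i) = (\<Sum>i\<in>R. a i (g i)) / (real n)^2 - (\<Sum>i\<in>R. rect rearr (cell n i) (cell n (g i)))"
    unfolding c_def using R gR by (simp add: rect_diff_kernel subset_eq sum_subtractf sum_divide_distrib)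
  moreover have "(\<Sum>i\<in>R. rect rearr (cell n i) (cell n (g i))) \<le> L * real (card R) / (real n)^2 + kernel_tail k L"
  proof -
    have inj_graph: "inj_on (\<lambda>i. (i, g i)) R" by (auto simp: inj_on_def)
    have "(\<Sum>i\<in>R. rect rearr (cell n i) (cell n (g i))) =
        (\<Sum>p\<in>(\<lambda>i. (i, g i)) ` R. rect rearr (cell n (fst p)) (cell n (snd p)))"
      by (simp add: sum.reindex[OF inj_graph])
    also have "\<dots> \<le> L * real (card ((\<lambda>i. (i, g i)) ` R)) / (real n)^2 + kernel_tail k L"
      unfolding rearr_def using R gR by (intro cell_pairs_mass_bound k t) auto
    finally show ?thesis by (simp add: card_image[OF inj_graph])
  qed
  ultimately show ?thesis by linarith
qed

end

lemma exists_injective_section: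
  obtains B where "B \<subseteq> A" "inj_on f B" "f ` B = f ` A"
proof
  let ?B = "inv_into A f ` f ` A"
  show "?B \<subseteq> A" by (auto intro: inv_into_into)
  show "inj_on f ?B" by (rule inj_onI) (auto simp: f_inv_into_f)
  show "f ` ?B = f ` A" by (auto simp: f_inv_into_f image_iff) (metis f_inv_into_f imageI inv_into_into)
qed

definition heavy_entries :: "(nat \<Rightarrow> nat \<Rightarrow> real) \<Rightarrow> nat \<Rightarrow> real \<Rightarrow> (nat \<times> nat) set" where
  "heavy_entries a n th = {(i,j). i < n \<and> j < n \<and> a i j > th * real n}"

definition heavy_rows :: "(nat \<Rightarrow> nat \<Rightarrow> real) \<Rightarrow> nat \<Rightarrow> real \<Rightarrow> nat set" where
  "heavy_rows a n th = fst ` heavy_entries a n th"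

definition heavy_col_of :: "(nat \<Rightarrow> nat \<Rightarrow> real) \<Rightarrow> nat \<Rightarrow> real \<Rightarrow> nat \<Rightarrow> nat" where
  "heavy_col_of a n th i = (SOME j. (i,j) \<in> heavy_entries a n th)"

definition heavy_cols :: "(nat \<Rightarrow> nat \<Rightarrow> real) \<Rightarrow> nat \<Rightarrow> real \<Rightarrow> nat set" where
  "heavy_cols a n th = heavy_col_of a n th ` heavy_rows a n th"

lemma heavy_rows_sub: "heavy_rows a n th \<subseteq> {..<n}"
  by (auto simp: heavy_rows_def heavy_entries_def)

lemma heavy_col_of: assumes "i \<in> heavy_rows a n th" shows "(i, heavy_col_of a n th i) \<in> heavy_entries a n th"
proof -
  obtain j where "(i, j) \<in> heavy_entries a n th" using assms unfolding heavy_rows_def by force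
  then show ?thesis unfolding heavy_col_of_def by (rule someI)
qed

lemma heavy_cols_sub: "heavy_cols a n th \<subseteq> {..<n}"
  using heavy_col_of by (fastforce simp: heavy_cols_def heavy_entries_def)

text \<open>Few heavy columns: one chosen heavy entry per heavy column forms a matching, whose mass is
  at least \<open>th n\<close> per column and at most the bound (2).\<close>

lemma heavy_cols_bound:
  fixes a :: "nat \<Rightarrow> nat \<Rightarrow> real"
  assumes n: "n > 0" and L: "L \<ge> 0"
    and match: "\<And>R g. R \<subseteq> {..<n} \<Longrightarrow> g ` R \<subseteq> {..<n} \<Longrightarrow> inj_on g R \<Longrightarrow>
          (\<Sum>i\<in>R. a i (g i)) / (real n)^2 \<le> d + L * real (card R) / (real n)^2 + T"
  shows "th * real (card (heavy_cols a n th)) / real n \<le> d + L / real n + T"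
proof -
  let ?g = "heavy_col_of a n th" and ?C = "heavy_cols a n th"
  obtain R where R: "R \<subseteq> heavy_rows a n th" "inj_on ?g R" "?g ` R = ?C"
    using exists_injective_section unfolding heavy_cols_def by metis
  have Rn: "R \<subseteq> {..<n}" using R(1) heavy_rows_sub by blast
  have cardR: "card R = card ?C" using card_image[OF R(2)] R(3) by simp
  have cardC: "card ?C \<le> n" using card_mono[OF finite_lessThan heavy_cols_sub] by simp
  have "(\<Sum>i\<in>R. th * real n) \<le> (\<Sum>i\<in>R. a i (?g i))"
    using heavy_col_of R(1) by (intro sum_mono) (force simp: heavy_entries_def)
  then have "real (card ?C) * (th * real n) / (real n)^2 \<le> (\<Sum>i\<in>R. a i (?g i)) / (real n)^2"
    by (intro divide_right_mono) (auto simp: cardR)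
  also have "\<dots> \<le> d + L * real (card ?C) / (real n)^2 + T"
    using match[OF Rn _ R(2)] R(3) heavy_cols_sub cardR by simp
  also have "L * real (card ?C) / (real n)^2 \<le> L / real n"
    using n L cardC by (simp add: power2_eq_square divide_simps mult_left_mono)
  finally show ?thesis using n by (simp add: power2_eq_square mult.commute)
qed

text \<open>Few heavy rows: by symmetry each heavy row contributes \<open>th n\<close> to the row sum of a heavy
  column, so the heavy columns carry mass at least \<open>th n |heavy rows|\<close>; compare with bound (1).\<close>

lemma heavy_rows_bound:
  fixes a :: "nat \<Rightarrow> nat \<Rightarrow> real"
  assumes n: "n > 0"
    and a: "\<And>i j. i < n \<Longrightarrow> j < n \<Longrightarrow> 0 \<le> a i j \<and> a i j = a j i"
    and S: "\<And>I. I \<subseteq> {..<n} \<Longrightarrow> (\<Sum>i\<in>I. \<Sum>j<n. a i j) / (real n)^2 \<le> d + L * real (card I * n) / (real n)^2 + T"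
  shows "th * real (card (heavy_rows a n th)) / real n \<le> d + L * real (card (heavy_cols a n th)) / real n + T"
proof -
  let ?g = "heavy_col_of a n th" and ?C = "heavy_cols a n th" and ?R = "heavy_rows a n th"
  have finR: "finite ?R" using heavy_rows_sub[of a n th] finite_subset by blast
  have gE: "i \<in> ?R \<Longrightarrow> i < n \<and> ?g i < n \<and> th * real n < a i (?g i)" for i
    using heavy_col_of[of i a n th] by (auto simp: heavy_entries_def)
  have "(\<Sum>i\<in>?R. th * real n) \<le> (\<Sum>i\<in>?R. a i (?g i))"
    using gE by (intro sum_mono) (simp add: less_imp_le)
  also have "\<dots> = (\<Sum>i\<in>?R. a (?g i) i)"
    using gE a by (intro sum.cong refl) auto
  also have "\<dots> = (\<Sum>j\<in>?C. \<Sum>i\<in>{i\<in>?R. ?g i = j}. a j i)"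
    unfolding heavy_cols_def by (subst sum.image_gen[OF finR]) (auto intro!: sum.cong)
  also have "\<dots> \<le> (\<Sum>j\<in>?C. \<Sum>i<n. a j i)"
  proof (rule sum_mono)
    fix j assume j: "j \<in> ?C"
    then have jn: "j < n" using heavy_cols_sub[of a n th] by blast
    show "(\<Sum>i\<in>{i\<in>?R. ?g i = j}. a j i) \<le> (\<Sum>i<n. a j i)"
      using heavy_rows_sub[of a n th] jn a by (intro sum_mono2) auto
  qed
  finally have "real (card ?R) * (th * real n) / (real n)^2 \<le> (\<Sum>j\<in>?C. \<Sum>i<n. a j i) / (real n)^2"
    by (intro divide_right_mono) auto
  also have "\<dots> \<le> d + L * real (card ?C * n) / (real n)^2 + T" by (rule S[OF heavy_cols_sub[of a n th]])
  finally show ?thesis using n by (simp add: power2_eq_square field_simps)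
qed

text \<open>Small heavy mass: the heavy entries lie in the heavy rows, whose mass is bounded by (1).\<close>

lemma heavy_mass_bound:
  fixes a :: "nat \<Rightarrow> nat \<Rightarrow> real"
  assumes n: "n > 0"
    and a: "\<And>i j. i < n \<Longrightarrow> j < n \<Longrightarrow> 0 \<le> a i j"
    and S: "\<And>I. I \<subseteq> {..<n} \<Longrightarrow> (\<Sum>i\<in>I. \<Sum>j<n. a i j) / (real n)^2 \<le> d + L * real (card I * n) / (real n)^2 + T"
  shows "(\<Sum>(i,j)\<in>heavy_entries a n th. a i j) / (real n)^2 \<le> d + L * real (card (heavy_rows a n th)) / real n + T"
proof -
  let ?R = "heavy_rows a n th"
  have finR: "finite ?R" using heavy_rows_sub[of a n th] finite_subset by blast
  have "(\<Sum>(i,j)\<in>heavy_entries a n th. a i j) \<le> (\<Sum>(i,j)\<in>?R \<times> {..<n}. a i j)"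
  proof (rule sum_mono2)
    show "finite (?R \<times> {..<n})" using finR by simp
    show "heavy_entries a n th \<subseteq> ?R \<times> {..<n}" by (force simp: heavy_rows_def heavy_entries_def)
    show "\<And>b. b \<in> ?R \<times> {..<n} - heavy_entries a n th \<Longrightarrow> 0 \<le> (case b of (i, j) \<Rightarrow> a i j)"
      using heavy_rows_sub[of a n th] a by auto
  qed
  also have "\<dots> = (\<Sum>i\<in>?R. \<Sum>j<n. a i j)" by (simp add: sum.cartesian_product)
  finally have "(\<Sum>(i,j)\<in>heavy_entries a n th. a i j) / (real n)^2 \<le> (\<Sum>i\<in>?R. \<Sum>j<n. a i j) / (real n)^2"
    by (intro divide_right_mono) auto
  also have "\<dots> \<le> d + L * real (card ?R * n) / (real n)^2 + T" by (rule S[OF heavy_rows_sub[of a n th]])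
  finally show ?thesis using n by (simp add: power2_eq_square)
qed

lemma tendsto_zero_by_truncation:
  fixes x y1 y2 :: "nat \<Rightarrow> real" and T :: "real \<Rightarrow> real"
  assumes Tsmall: "\<And>e. e > 0 \<Longrightarrow> \<exists>L\<ge>0. T L \<le> e"
    and y1: "y1 \<longlonglongrightarrow> 0" and y2: "y2 \<longlonglongrightarrow> 0"
    and x0: "\<And>n. n > 0 \<Longrightarrow> 0 \<le> x n"
    and bnd: "\<And>n L. n > 0 \<Longrightarrow> L \<ge> 0 \<Longrightarrow> x n \<le> y1 n + L * y2 n + T L"
  shows "x \<longlonglongrightarrow> 0"
proof (rule LIMSEQ_I)
  fix e :: real assume e: "e > 0"
  obtain L where L: "L \<ge> 0" "T L \<le> e / 3" using Tsmall[of "e/3"] e by auto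
  have "(\<lambda>n. L * y2 n) \<longlonglongrightarrow> 0" using tendsto_mult_right_zero[OF y2] by simp
  then have ev2: "eventually (\<lambda>n. L * y2 n < e / 3) sequentially"
    using e order_tendstoD(2)[of "\<lambda>n. L * y2 n" 0 sequentially "e/3"] by simp
  have ev1: "eventually (\<lambda>n. y1 n < e / 3) sequentially"
    using e y1 order_tendstoD(2)[of y1 0 sequentially "e/3"] by simp
  have ev3: "eventually (\<lambda>n. n > 0) sequentially" by (rule eventually_gt_at_top)
  from eventually_conj[OF ev1 eventually_conj[OF ev2 ev3]]
  obtain N where N: "\<And>n. n \<ge> N \<Longrightarrow> y1 n < e / 3 \<and> L * y2 n < e / 3 \<and> n > 0"
    by (auto simp: eventually_sequentially)
  show "\<exists>N. \<forall>n\<ge>N. norm (x n - 0) < e"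
  proof (intro exI allI impI)
    fix n assume "n \<ge> N"
    with N have *: "y1 n < e / 3" "L * y2 n < e / 3" "n > 0" by auto
    have "x n \<le> y1 n + L * y2 n + T L" by (rule bnd[OF *(3) L(1)])
    then show "norm (x n - 0) < e" using * L x0[OF *(3)] by simp
  qed
qed

text \<open>For any \<open>N :: nat \<Rightarrow> nat\<close> there is an index sequence \<open>K n \<longrightarrow> \<infinity>\<close> growing so slowly
  that \<open>N (K n) \<le> n\<close>: take the largest \<open>k \<le> n\<close> with \<open>N j \<le> n\<close> for all \<open>j \<le> k\<close>.\<close>

lemma slowly_diverging_index:
  fixes N :: "nat \<Rightarrow> nat"
  obtains K :: "nat \<Rightarrow> nat" where "filterlim K at_top sequentially" "\<And>n. n \<ge> N 0 \<Longrightarrow> N (K n) \<le> n"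
proof
  define K where "K n = Max ({0} \<union> {k. k \<le> n \<and> (\<forall>j\<le>k. N j \<le> n)})" for n
  have finK: "finite ({0} \<union> {k. k \<le> n \<and> (\<forall>j\<le>k. N j \<le> n)})" for n by auto
  show "N (K n) \<le> n" if "n \<ge> N 0" for n
  proof -
    have "K n \<in> {0} \<union> {k. k \<le> n \<and> (\<forall>j\<le>k. N j \<le> n)}"
      unfolding K_def by (rule Max_in[OF finK]) auto
    then show ?thesis using that by auto
  qed
  show "filterlim K at_top sequentially"
  proof (subst filterlim_at_top, intro allI)
    fix k0 :: nat
    define n0 where "n0 = max k0 (Max (N ` {..k0}))"
    have "\<forall>j\<le>k0. N j \<le> n0" unfolding n0_def by (auto intro!: max.coboundedI2 Max_ge)
    then have "k0 \<le> K n" if "n \<ge> n0" for n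
      unfolding K_def using that finK by (intro Max_ge) (auto simp: n0_def)
    then show "eventually (\<lambda>n. k0 \<le> K n) sequentially" by (auto simp: eventually_sequentially)
  qed
qed

lemma diagonal_threshold:
  fixes s :: "real \<Rightarrow> nat \<Rightarrow> real"
  assumes s: "\<And>th. th > 0 \<Longrightarrow> s th \<longlonglongrightarrow> 0"
  shows "\<exists>th :: nat \<Rightarrow> real. (\<forall>n. th n > 0) \<and> th \<longlonglongrightarrow> 0 \<and> (\<lambda>n. s (th n) n / th n) \<longlonglongrightarrow> 0"
proof -
  define f where "f k n = s (1 / (real k + 1)) n * (real k + 1)" for k n
  have "\<exists>N. \<forall>m\<ge>N. \<bar>f k m\<bar> \<le> 1 / (real k + 1)" for k
  proof -
    have "f k \<longlonglongrightarrow> 0"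
      unfolding f_def using tendsto_mult_left_zero[OF s[of "1 / (real k + 1)"]] by simp
    from LIMSEQ_D[OF this, of "1 / (real k + 1)"]
    obtain N where "\<forall>n\<ge>N. norm (f k n - 0) < 1 / (real k + 1)" by auto
    then show ?thesis by (auto intro: less_imp_le)
  qed
  then obtain N where N: "\<And>k m. m \<ge> N k \<Longrightarrow> \<bar>f k m\<bar> \<le> 1 / (real k + 1)" by metis
  obtain K where Ktop: "filterlim K at_top sequentially" and KN: "\<And>n. n \<ge> N 0 \<Longrightarrow> N (K n) \<le> n"
    using slowly_diverging_index[of N] by blast
  define th where "th n = 1 / (real (K n) + 1)" for n
  have th: "th \<longlonglongrightarrow> 0"
  proof -
    have "filterlim (\<lambda>n. real (K n)) at_top sequentially"
      by (rule filterlim_compose[OF filterlim_real_sequentially Ktop])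
    from filterlim_tendsto_add_at_top[OF tendsto_const this, of 1]
    have "filterlim (\<lambda>n. real (K n) + 1) at_top sequentially" by (simp add: add.commute)
    then show ?thesis
      unfolding th_def by (simp add: tendsto_divide_0[OF tendsto_const] filterlim_at_top_imp_at_infinity)
  qed
  have "eventually (\<lambda>n. norm (s (th n) n / th n) \<le> th n) sequentially"
    using eventually_ge_at_top[of "N 0"]
  proof (rule eventually_mono)
    fix n assume "n \<ge> N 0"
    then have "\<bar>f (K n) n\<bar> \<le> 1 / (real (K n) + 1)" using N KN by blast
    then show "norm (s (th n) n / th n) \<le> th n" by (simp add: th_def f_def)
  qed
  from Lim_null_comparison[OF this th] have "(\<lambda>n. s (th n) n / th n) \<longlonglongrightarrow> 0" .
  moreover have "\<forall>n. th n > 0" by (simp add: th_def)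
  ultimately show ?thesis using th by blast
qed

lemma mp_bij_id: "mp_bij id"
  by (auto simp: mp_bij_def sets_unit_iv Int_absorb2)

lemma cut_dist_approx:
  assumes "e > 0"
  obtains t where "mp_bij t" "cut_norm (\<lambda>(x,y). k1 x y - k2 (t x) (t y)) < cut_dist k1 k2 + e"
proof -
  let ?X = "{cut_norm (\<lambda>(x,y). k1 x y - k2 (t x) (t y)) | t. mp_bij t}"
  have "?X \<noteq> {}" using mp_bij_id by blast
  moreover have "Inf ?X < cut_dist k1 k2 + e" using assms by (simp add: cut_dist_def)
  ultimately obtain c where "c \<in> ?X" "c < cut_dist k1 k2 + e" by (meson cInf_lessD)
  then show ?thesis using that by blast
qed

lemma near_optimal_bijections:
  assumes k: "is_kernel k" and lim: "(\<lambda>n. cut_dist (step_kernel n (A n)) k) \<longlonglongrightarrow> 0"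
  obtains t where "\<And>n. mp_bij (t n)" "(\<lambda>n. cut_norm (diff_kernel k (t n) n (A n))) \<longlonglongrightarrow> 0"
proof -
  have "\<forall>n. \<exists>t. mp_bij t \<and> cut_norm (diff_kernel k t n (A n)) < cut_dist (step_kernel n (A n)) k + 1 / (real n + 1)"
  proof
    fix n
    obtain t where t: "mp_bij t"
      "cut_norm (\<lambda>(x,y). step_kernel n (A n) x y - k (t x) (t y)) < cut_dist (step_kernel n (A n)) k + 1 / (real n + 1)"
      by (rule cut_dist_approx[of "1 / (real n + 1)"]) simp
    then show "\<exists>t. mp_bij t \<and> cut_norm (diff_kernel k t n (A n)) < cut_dist (step_kernel n (A n)) k + 1 / (real n + 1)"
      by (intro exI[of _ t]) (simp add: diff_kernel_def[OF k t(1)])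
  qed
  from choice[OF this] obtain t where t: "\<And>n. mp_bij (t n)" and
    close: "\<And>n. cut_norm (diff_kernel k (t n) n (A n)) < cut_dist (step_kernel n (A n)) k + 1 / (real n + 1)"
    by blast
  have "(\<lambda>n. 1 / (real n + 1)) \<longlonglongrightarrow> 0"
    using LIMSEQ_inverse_real_of_nat by (simp add: inverse_eq_divide add.commute)
  with lim have upper: "(\<lambda>n. cut_dist (step_kernel n (A n)) k + 1 / (real n + 1)) \<longlonglongrightarrow> 0"
    using tendsto_add by fastforce
  have "(\<lambda>n. cut_norm (diff_kernel k (t n) n (A n))) \<longlonglongrightarrow> 0"
  proof (rule tendsto_sandwich[OF _ _ tendsto_const upper])
    show "eventually (\<lambda>n. 0 \<le> cut_norm (diff_kernel k (t n) n (A n))) sequentially"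
      using cut_norm_nonneg[OF integrable_diff[OF k t]] by simp
    show "eventually (\<lambda>n. cut_norm (diff_kernel k (t n) n (A n))
        \<le> cut_dist (step_kernel n (A n)) k + 1 / (real n + 1)) sequentially"
      using close by (simp add: less_imp_le)
  qed
  with t that show ?thesis by blast
qed

text \<open>For a fixed level \<open>th > 0\<close>, the entries of \<open>A n\<close> exceeding \<open>th n\<close> carry mass \<open>o(n\<^sup>2)\<close>:
  successively, few heavy columns, few heavy rows, small heavy mass.\<close>

lemma heavy_mass_vanishes:
  assumes k: "is_kernel k"
    and A: "\<And>n i j. i < n \<Longrightarrow> j < n \<Longrightarrow> 0 \<le> A n i j \<and> A n i j = A n j i"
    and t: "\<And>n. mp_bij (t n)"
    and dd: "(\<lambda>n. cut_norm (diff_kernel k (t n) n (A n))) \<longlonglongrightarrow> 0" (is "?d \<longlonglongrightarrow> 0")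
    and th: "th > 0"
  shows "(\<lambda>n. (\<Sum>(i,j)\<in>heavy_entries (A n) n th. A n i j) / (real n)^2) \<longlonglongrightarrow> 0"
proof -
  have A_nonneg: "\<And>n i j. i < n \<Longrightarrow> j < n \<Longrightarrow> 0 \<le> A n i j" using A by blast
  have tail: "\<And>e. e > 0 \<Longrightarrow> \<exists>L\<ge>0. kernel_tail k L \<le> e" by (rule kernel_tail_small[OF k])
  have strip: "I \<subseteq> {..<n} \<Longrightarrow>
      (\<Sum>i\<in>I. \<Sum>j<n. A n i j) / (real n)^2 \<le> ?d n + L * real (card I * n) / (real n)^2 + kernel_tail k L"
    for I n L by (rule strip_bound[OF k t])
  have match: "R \<subseteq> {..<n} \<Longrightarrow> g ` R \<subseteq> {..<n} \<Longrightarrow> inj_on g R \<Longrightarrow>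
      (\<Sum>i\<in>R. A n i (g i)) / (real n)^2 \<le> 4 * ?d n + L * real (card R) / (real n)^2 + kernel_tail k L"
    for R g n L by (rule matching_bound[OF k t])
  have "(\<lambda>n. th * real (card (heavy_cols (A n) n th)) / real n) \<longlonglongrightarrow> 0"
  proof (rule tendsto_zero_by_truncation[OF tail _ lim_1_over_n])
    show "(\<lambda>n. 4 * ?d n) \<longlonglongrightarrow> 0" using tendsto_mult_right_zero[OF dd, of 4] by simp
    show "0 \<le> th * real (card (heavy_cols (A n) n th)) / real n" for n using th by simp
    show "th * real (card (heavy_cols (A n) n th)) / real n \<le> 4 * ?d n + L * (1 / real n) + kernel_tail k L"
      if "n > 0" "L \<ge> 0" for n L
      using heavy_cols_bound[OF that match] by (simp add: divide_inverse)
  qed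
  from tendsto_mult_right_zero[OF this, of "1 / th"]
  have cols: "(\<lambda>n. real (card (heavy_cols (A n) n th)) / real n) \<longlonglongrightarrow> 0" using th by simp
  have "(\<lambda>n. th * real (card (heavy_rows (A n) n th)) / real n) \<longlonglongrightarrow> 0"
  proof (rule tendsto_zero_by_truncation[OF tail dd cols])
    show "0 \<le> th * real (card (heavy_rows (A n) n th)) / real n" for n using th by simp
    show "th * real (card (heavy_rows (A n) n th)) / real n
        \<le> ?d n + L * (real (card (heavy_cols (A n) n th)) / real n) + kernel_tail k L"
      if "n > 0" "L \<ge> 0" for n L
      using heavy_rows_bound[OF that(1) A strip] by simp
  qed
  from tendsto_mult_right_zero[OF this, of "1 / th"]
  have rows: "(\<lambda>n. real (card (heavy_rows (A n) n th)) / real n) \<longlonglongrightarrow> 0" using th by simp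
  show ?thesis
  proof (rule tendsto_zero_by_truncation[OF tail dd rows])
    show "0 \<le> (\<Sum>(i,j)\<in>heavy_entries (A n) n th. A n i j) / (real n)^2" for n
      using A_nonneg by (intro divide_nonneg_nonneg sum_nonneg) (auto simp: heavy_entries_def)
    show "(\<Sum>(i,j)\<in>heavy_entries (A n) n th. A n i j) / (real n)^2
        \<le> ?d n + L * (real (card (heavy_rows (A n) n th)) / real n) + kernel_tail k L"
      if "n > 0" "L \<ge> 0" for n L
      using heavy_mass_bound[OF that(1) A_nonneg strip] by simp
  qed
qed

text \<open>If the mass above the levels \<open>th n \<longrightarrow> 0\<close> is \<open>o(n\<^sup>2 th n)\<close>, then \<open>M n = th n \<cdot> n\<close> has all the
  required properties (each heavy entry exceeds \<open>th n \<cdot> n\<close>, which bounds their number).\<close>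

lemma threshold_properties:
  fixes A :: "nat \<Rightarrow> nat \<Rightarrow> nat \<Rightarrow> real" and th :: "nat \<Rightarrow> real"
  assumes pos: "\<And>n. th n > 0" and th: "th \<longlonglongrightarrow> 0"
    and mass: "(\<lambda>n. (\<Sum>(i,j)\<in>heavy_entries (A n) n (th n). A n i j) / (real n)^2 / th n) \<longlonglongrightarrow> 0"
      (is "?q \<longlonglongrightarrow> 0")
  defines "M \<equiv> \<lambda>n. th n * real n"
  shows "M \<in> o(\<lambda>n. real n) \<and>
         (\<lambda>n. real (card {(i,j). i < n \<and> j < n \<and> A n i j > M n})) \<in> o(\<lambda>n. real n) \<and>
         (\<lambda>n. \<Sum>(i,j)\<in>{(i,j). i < n \<and> j < n \<and> A n i j > M n}. A n i j) \<in> o(\<lambda>n. (real n)^2)"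
proof (intro conjI)
  have E: "{(i,j). i < n \<and> j < n \<and> A n i j > M n} = heavy_entries (A n) n (th n)" for n
    by (simp add: heavy_entries_def M_def)
  have n_pos: "eventually (\<lambda>n::nat. n > 0) sequentially" by (rule eventually_gt_at_top)
  have "(\<lambda>n. M n / real n) \<longlonglongrightarrow> 0"
  proof (rule Lim_transform_eventually[OF th])
    show "eventually (\<lambda>n. th n = M n / real n) sequentially"
      using n_pos by (rule eventually_mono) (simp add: M_def)
  qed
  then show "M \<in> o(\<lambda>n. real n)"
    by (rule smalloI_tendsto) (use n_pos in \<open>auto elim: eventually_mono\<close>)
  have "(\<lambda>n. ?q n * th n) \<longlonglongrightarrow> 0 * 0" by (rule tendsto_mult[OF mass th])
  then have "(\<lambda>n. (\<Sum>(i,j)\<in>heavy_entries (A n) n (th n). A n i j) / (real n)^2) \<longlonglongrightarrow> 0"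
    using pos by (simp add: less_imp_neq[symmetric])
  then show "(\<lambda>n. \<Sum>(i,j)\<in>{(i,j). i < n \<and> j < n \<and> A n i j > M n}. A n i j) \<in> o(\<lambda>n. (real n)^2)"
    by (intro smalloI_tendsto) (use n_pos in \<open>auto elim: eventually_mono simp: E\<close>)
  have count: "real (card (heavy_entries (A n) n (th n))) / real n \<le> ?q n" if n: "n > 0" for n
  proof -
    let ?E = "heavy_entries (A n) n (th n)"
    have "(\<Sum>p\<in>?E. th n * real n) \<le> (\<Sum>(i,j)\<in>?E. A n i j)"
      by (intro sum_mono) (auto simp: heavy_entries_def less_imp_le)
    then have "real (card ?E) * (th n * real n) \<le> (\<Sum>(i,j)\<in>?E. A n i j)" by simp
    then show ?thesis using n pos[of n] by (simp add: field_simps power2_eq_square)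
  qed
  have "(\<lambda>n. real (card (heavy_entries (A n) n (th n))) / real n) \<longlonglongrightarrow> 0"
  proof (rule tendsto_sandwich[OF _ _ tendsto_const mass])
    show "eventually (\<lambda>n. real (card (heavy_entries (A n) n (th n))) / real n \<le> ?q n) sequentially"
      using n_pos by (rule eventually_mono) (rule count)
  qed simp
  then show "(\<lambda>n. real (card {(i,j). i < n \<and> j < n \<and> A n i j > M n})) \<in> o(\<lambda>n. real n)"
    by (intro smalloI_tendsto) (use n_pos in \<open>auto elim: eventually_mono simp: E\<close>)
qed

theorem mainTheorem10:
  fixes k :: "real \<Rightarrow> real \<Rightarrow> real" and A :: "nat \<Rightarrow> nat \<Rightarrow> nat \<Rightarrow> real"
  assumes "is_kernel k"
    and "\<And>n i j. i < n \<Longrightarrow> j < n \<Longrightarrow> 0 \<le> A n i j \<and> A n i j = A n j i"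
    and "(\<lambda>n. cut_dist (step_kernel n (A n)) k) \<longlonglongrightarrow> 0"
  shows "\<exists>M :: nat \<Rightarrow> real. M \<in> o(\<lambda>n. real n) \<and>
           (\<lambda>n. real (card {(i,j). i < n \<and> j < n \<and> A n i j > M n})) \<in> o(\<lambda>n. real n) \<and>
           (\<lambda>n. \<Sum>(i,j)\<in>{(i,j). i < n \<and> j < n \<and> A n i j > M n}. A n i j) \<in> o(\<lambda>n. (real n)^2)"
proof -
  obtain t where t: "\<And>n. mp_bij (t n)" and dd: "(\<lambda>n. cut_norm (diff_kernel k (t n) n (A n))) \<longlonglongrightarrow> 0"
    using near_optimal_bijections[OF assms(1,3)] by blast
  define s where "s th n = (\<Sum>(i,j)\<in>heavy_entries (A n) n th. A n i j) / (real n)^2" for th n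
  have "th > 0 \<Longrightarrow> s th \<longlonglongrightarrow> 0" for th
    unfolding s_def by (rule heavy_mass_vanishes[OF assms(1,2) t dd])
  then obtain th where pos: "\<forall>n. th n > 0" and lim: "th \<longlonglongrightarrow> 0"
    and mass: "(\<lambda>n. s (th n) n / th n) \<longlonglongrightarrow> 0"
    using diagonal_threshold[of s] by blast
  show ?thesis
    using threshold_properties[OF pos[rule_format] lim mass[unfolded s_def]] by blast
qed

end
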